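(* Let $\gamma$ be a join-irreducible element of the weak order on $B_n$ with associated signed subset $A$ and associated $m,M$ as described below. Then (i) $\deg(\gamma)=1$ if and only if $|(m,M)\cap(\pm[n])|=0$; and (ii) $\deg(\gamma)=2$ if and only if either $|(m,M)\cap(\pm[n])|=1$ or $(m,M)=(-2,2)$.
   Context: $B_n$: signed permutations of $\pm[n]=\{\pm1,\dots,\pm n\}$ ($x(-i)=-x(i)$), full notation $x_{-n},\dots,x_{-1},x_1,\dots,x_n$; Coxeter generators $S=\{s_0,\dots,s_{n-1}\}$ with $s_0=(-1\ 1)$, $s_i=(i\ i{+}1)(-i{-}1\ {-i})$. Weak order $v\le w$ iff $I(v)\subseteq I(w)$, $I(w)$ the reflections $t$ with $\ell(tw)<\ell(w)$. An element is join-irreducible if it covers exactly one element. A signed subset of $[n]$ is $A\subseteq\pm[n]$ with $\{-i,i\}\not\subseteq A$ for all $i$. Let $-A=\{a:-a\in A\}$, $\pm A=A\cup-A$, complements taken in $\pm[n]$, $m=\min A$, and $M=-m$ if $|A|=n$, otherwise $M=\max(\pm A)^c$. Join-irreducibles of $B_n$ correspond bijectively to signed subsets with $M>m$: the full notation of $\gamma$ lists the elements of $-A$ in increasing order, then those of $(\pm A)^c$ in increasing order, then those of $A$ in increasing order. $(m,M)$ denotes the open real interval. The degree $\deg(\gamma)$ is the smallest $|K|$ over $K\subseteq S$ with $\gamma$ in the subgroup generated by $K$. *)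

theory Defs
  imports Main
begin

definition pm :: "nat \<Rightarrow> int set" where
  "pm n = {i. 1 \<le> \<bar>i\<bar> \<and> \<bar>i\<bar> \<le> int n}"

text \<open>Signed permutations, extended by the identity outside \<plusminus>[n].\<close>
definition Bn :: "nat \<Rightarrow> (int \<Rightarrow> int) set" where
  "Bn n = {x. bij_betw x (pm n) (pm n) \<and> (\<forall>i. x (-i) = - x i) \<and> (\<forall>i. i \<notin> pm n \<longrightarrow> x i = i)}"

text \<open>Coxeter generators: s_0 = (-1 1), s_i = (i i+1)(-i-1 -i) for 1 <= i <= n-1.\<close>
definition gen :: "nat \<Rightarrow> int \<Rightarrow> int" where
  "gen i x = (if i = 0 then (if x = 1 then -1 else if x = -1 then 1 else x)
     else (if x = int i then int i + 1 else if x = int i + 1 then int i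
     else if x = - int i then - int i - 1 else if x = - int i - 1 then - int i else x))"

definition word_prod :: "nat list \<Rightarrow> int \<Rightarrow> int" where
  "word_prod ws = foldr (\<lambda>i f. gen i \<circ> f) ws id"

definition len :: "nat \<Rightarrow> (int \<Rightarrow> int) \<Rightarrow> nat" where
  "len n w = (LEAST k. \<exists>ws. length ws = k \<and> set ws \<subseteq> {..<n} \<and> word_prod ws = w)"

definition reflections :: "nat \<Rightarrow> (int \<Rightarrow> int) set" where
  "reflections n = {u \<circ> gen s \<circ> inv u | u s. u \<in> Bn n \<and> s < n}"

definition inv_set :: "nat \<Rightarrow> (int \<Rightarrow> int) \<Rightarrow> (int \<Rightarrow> int) set" where
  "inv_set n w = {t \<in> reflections n. len n (t \<circ> w) < len n w}"

definition weak_le :: "nat \<Rightarrow> (int \<Rightarrow> int) \<Rightarrow> (int \<Rightarrow> int) \<Rightarrow> bool" where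
  "weak_le n v w \<longleftrightarrow> v \<in> Bn n \<and> w \<in> Bn n \<and> inv_set n v \<subseteq> inv_set n w"

definition weak_lt :: "nat \<Rightarrow> (int \<Rightarrow> int) \<Rightarrow> (int \<Rightarrow> int) \<Rightarrow> bool" where
  "weak_lt n v w \<longleftrightarrow> weak_le n v w \<and> v \<noteq> w"

definition covers :: "nat \<Rightarrow> (int \<Rightarrow> int) \<Rightarrow> (int \<Rightarrow> int) \<Rightarrow> bool" where
  "covers n w v \<longleftrightarrow> weak_lt n v w \<and> \<not> (\<exists>u. weak_lt n v u \<and> weak_lt n u w)"

definition join_irreducible :: "nat \<Rightarrow> (int \<Rightarrow> int) \<Rightarrow> bool" where
  "join_irreducible n w \<longleftrightarrow> w \<in> Bn n \<and> (\<exists>!v. covers n w v)"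

inductive_set gen_by :: "nat set \<Rightarrow> (int \<Rightarrow> int) set" for K where
  gen_by_id: "id \<in> gen_by K"
| gen_by_step: "x \<in> gen_by K \<Longrightarrow> i \<in> K \<Longrightarrow> gen i \<circ> x \<in> gen_by K"

definition deg :: "nat \<Rightarrow> (int \<Rightarrow> int) \<Rightarrow> nat" where
  "deg n g = (LEAST k. \<exists>K. K \<subseteq> {..<n} \<and> card K = k \<and> g \<in> gen_by K)"

definition signed_subset :: "nat \<Rightarrow> int set \<Rightarrow> bool" where
  "signed_subset n A \<longleftrightarrow> A \<subseteq> pm n \<and> (\<forall>i. \<not> {-i, i} \<subseteq> A)"

definition mA :: "int set \<Rightarrow> int" where
  "mA A = Min A"

definition MA :: "nat \<Rightarrow> int set \<Rightarrow> int" where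
  "MA n A = (if card A = n then - Min A else Max (pm n - (A \<union> uminus ` A)))"

text \<open>Full notation x_{-n},...,x_{-1},x_1,...,x_n: the values listed are
  -A increasing, then (\<plusminus>A)^c increasing, then A increasing.\<close>
definition gamma_list :: "nat \<Rightarrow> int set \<Rightarrow> int list" where
  "gamma_list n A = sorted_list_of_set (uminus ` A)
     @ sorted_list_of_set (pm n - (A \<union> uminus ` A)) @ sorted_list_of_set A"

definition pos_index :: "nat \<Rightarrow> int \<Rightarrow> nat" where
  "pos_index n i = (if i < 0 then nat (i + int n) else nat (i + int n - 1))"

definition gamma_of :: "nat \<Rightarrow> int set \<Rightarrow> int \<Rightarrow> int" where
  "gamma_of n A i = (if i \<in> pm n then gamma_list n A ! pos_index n i else i)"

end

(*
  The generator s_j is the only one moving values across the cut between j and j + 1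
  (for j = 0: across 0), and a signed permutation lies in the subgroup generated by
  {s_i | i in K} as soon as it preserves every cut j outside K (induction on n, moving
  w(n+1) back to n+1 with generators from K). Hence deg w is the number of cuts
  0 <= j < n broken by w.

  Positions 1..n of gamma carry (+-A)^c \<inter> [n] increasingly, followed by A increasingly;
  so gamma(n-|A|) = M, gamma(n-|A|+1) = m, and gamma fixes everything beyond max(M, -m)
  and, when m > 0, everything below m. Therefore gamma breaks exactly the cuts with
  m <= j < M or j < -m, which gives deg gamma = M - m for m > 0 and max(M, -m) for m < 0,
  whereas (m, M) contains M - m - 1, resp. M - m - 2, elements of +-[n].
*)

theory Submission
  imports Defs
begin

lemma pm_iff: "x \<in> pm n \<longleftrightarrow> 1 \<le> \<bar>x\<bar> \<and> \<bar>x\<bar> \<le> int n"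
  by (simp add: pm_def)

lemma finite_pm: "finite (pm n)"
  by (rule finite_subset[of _ "{- int n..int n}"]) (auto simp: pm_iff)

lemma pm_Suc: "pm (Suc n) = pm n \<union> {int (Suc n), - int (Suc n)}"
  by (auto simp: pm_iff)

lemma gen_gen [simp]: "gen i (gen i x) = x"
  by (auto simp: gen_def)

lemma gen_uminus: "gen i (- x) = - gen i x"
  by (auto simp: gen_def)

lemma gen_Bn: "i < n \<Longrightarrow> gen i \<in> Bn n"
proof -
  assume i: "i < n"
  have "gen i ` pm n \<subseteq> pm n"
    using i by (auto simp: gen_def pm_iff)
  moreover have "pm n \<subseteq> gen i ` pm n"
  proof
    fix x assume "x \<in> pm n"
    then have "gen i x \<in> pm n"
      using \<open>gen i ` pm n \<subseteq> pm n\<close> by blast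
    then show "x \<in> gen i ` pm n"
      using image_eqI[of x "gen i" "gen i x"] by simp
  qed
  moreover have "inj_on (gen i) (pm n)"
    by (metis gen_gen inj_onI)
  moreover have "gen i x = x" if "x \<notin> pm n" for x
    using i that by (auto simp: gen_def pm_iff)
  ultimately show ?thesis
    unfolding Bn_def bij_betw_def by (simp add: gen_uminus)
qed

lemma id_Bn: "id \<in> Bn n"
  by (simp add: Bn_def)

lemma Bn_comp: "u \<in> Bn n \<Longrightarrow> w \<in> Bn n \<Longrightarrow> u \<circ> w \<in> Bn n"
  unfolding Bn_def using bij_betw_trans by fastforce

lemma Bn_bij_betw: "w \<in> Bn n \<Longrightarrow> bij_betw w (pm n) (pm n)"
  by (simp add: Bn_def)

lemma Bn_uminus: "w \<in> Bn n \<Longrightarrow> w (- x) = - w x"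
  by (simp add: Bn_def)

lemma Bn_outside: "w \<in> Bn n \<Longrightarrow> x \<notin> pm n \<Longrightarrow> w x = x"
  by (simp add: Bn_def)

lemma Bn_in_pm: "w \<in> Bn n \<Longrightarrow> x \<in> pm n \<Longrightarrow> w x \<in> pm n"
  unfolding Bn_def bij_betw_def by blast

lemma Bn_inj: "w \<in> Bn n \<Longrightarrow> x \<in> pm n \<Longrightarrow> y \<in> pm n \<Longrightarrow> w x = w y \<Longrightarrow> x = y"
  unfolding Bn_def bij_betw_def inj_on_def by blast

lemma Bn_0: "w \<in> Bn 0 \<Longrightarrow> w = id"
proof (rule ext)
  fix x assume "w \<in> Bn 0"
  moreover have "x \<notin> pm 0"
    unfolding pm_iff by arith
  ultimately show "w x = id x"
    by (simp add: Bn_outside)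
qed

lemma Bn_SucD:
  assumes w: "w \<in> Bn (Suc n)" and top: "w (int (Suc n)) = int (Suc n)"
  shows "w \<in> Bn n"
proof -
  let ?E = "{int (Suc n), - int (Suc n)}"
  have "w (- int (Suc n)) = - int (Suc n)"
    using Bn_uminus[OF w] top by metis
  then have "bij_betw w ?E ?E"
    using top by (auto simp: bij_betw_def)
  then have "bij_betw w (pm (Suc n) - ?E) (pm (Suc n) - ?E)"
    by (intro bij_betw_DiffI Bn_bij_betw[OF w]) (auto simp: pm_iff)
  moreover have "pm (Suc n) - ?E = pm n"
    by (auto simp: pm_iff)
  moreover have "w x = x" if "x \<notin> pm n" for x
    using that top \<open>w (- int (Suc n)) = - int (Suc n)\<close> Bn_outside[OF w, of x]
    by (auto simp: pm_Suc)
  ultimately show ?thesis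
    using Bn_uminus[OF w] unfolding Bn_def by auto
qed

lemma gen_in_gen_by: "i \<in> K \<Longrightarrow> gen i \<in> gen_by K"
  using gen_by.gen_by_step[OF gen_by.gen_by_id] by simp

lemma gen_by_Bn: "w \<in> gen_by K \<Longrightarrow> K \<subseteq> {..<n} \<Longrightarrow> w \<in> Bn n"
  by (induction rule: gen_by.induct) (auto simp: id_Bn intro!: Bn_comp gen_Bn)

lemma gen_by_mono: "w \<in> gen_by K \<Longrightarrow> K \<subseteq> L \<Longrightarrow> w \<in> gen_by L"
  by (induction rule: gen_by.induct) (auto intro: gen_by.intros)

lemma gen_by_comp: "u \<in> gen_by K \<Longrightarrow> w \<in> gen_by K \<Longrightarrow> u \<circ> w \<in> gen_by K"
  by (induction rule: gen_by.induct) (auto simp: comp_assoc intro: gen_by.intros)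

lemma gen_by_cancel_left: "u \<in> gen_by K \<Longrightarrow> u \<circ> w \<in> gen_by K \<Longrightarrow> w \<in> gen_by K"
proof (induction rule: gen_by.induct)
  case gen_by_id
  then show ?case by simp
next
  case (gen_by_step x i)
  have "gen i \<circ> ((gen i \<circ> x) \<circ> w) \<in> gen_by K"
    by (rule gen_by.gen_by_step[OF gen_by_step.prems gen_by_step.hyps(2)])
  then have "x \<circ> w \<in> gen_by K"
    by (simp add: comp_def)
  then show ?case
    using gen_by_step.IH by blast
qed

lemma gen_by_moves_up:
  "1 \<le> a \<Longrightarrow> a \<le> b \<Longrightarrow> \<exists>u \<in> gen_by {a..<b}. u (int a) = int b"
proof (induction b)
  case (Suc b)
  show ?case
  proof (cases "a = Suc b")
    case False
    then obtain u where u: "u \<in> gen_by {a..<b}" "u (int a) = int b"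
      using Suc by auto
    have "gen b \<circ> u \<in> gen_by {a..<Suc b}"
      using False Suc.prems by (intro gen_by.gen_by_step gen_by_mono[OF u(1)]) auto
    moreover have "(gen b \<circ> u) (int a) = int (Suc b)"
      using u(2) Suc.prems False by (auto simp: gen_def)
    ultimately show ?thesis by blast
  qed (auto intro: bexI[of _ id] gen_by.intros)
qed simp

lemma gen_by_moves_down:
  "1 \<le> b \<Longrightarrow> b \<le> a \<Longrightarrow> \<exists>u \<in> gen_by {b..<a}. u (- int a) = - int b"
proof (induction a)
  case (Suc a)
  show ?case
  proof (cases "b = Suc a")
    case False
    then obtain u where u: "u \<in> gen_by {b..<a}" "u (- int a) = - int b"
      using Suc by auto
    have "u \<circ> gen a \<in> gen_by {b..<Suc a}"
      using False Suc.prems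
      by (intro gen_by_comp gen_by_mono[OF u(1)] gen_in_gen_by) auto
    moreover have "(u \<circ> gen a) (- int (Suc a)) = - int b"
      using u(2) Suc.prems False by (auto simp: gen_def)
    ultimately show ?thesis by blast
  qed (auto intro: bexI[of _ id] gen_by.intros)
qed simp

definition preserves_cut :: "(int \<Rightarrow> int) \<Rightarrow> nat \<Rightarrow> bool" where
  "preserves_cut w j \<longleftrightarrow> (\<forall>x. int j < w x \<longleftrightarrow> int j < x)"

lemma gen_by_preserves_cut: "w \<in> gen_by K \<Longrightarrow> j \<notin> K \<Longrightarrow> preserves_cut w j"
proof (induction rule: gen_by.induct)
  case (gen_by_step x i)
  then have "i \<noteq> j"
    by blast
  then have "int j < gen i y \<longleftrightarrow> int j < y" for y
    by (auto simp: gen_def)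
  then show ?case
    using gen_by_step by (simp add: preserves_cut_def)
qed (simp add: preserves_cut_def)

lemma gen_by_moves_to_top:
  assumes y: "y \<in> pm (Suc n)" and K: "{i. i \<le> n \<and> y \<le> int i} \<subseteq> K"
  shows "\<exists>u \<in> gen_by (K \<inter> {..n}). u y = int (Suc n)"
proof (cases "0 < y")
  case True
  then have "1 \<le> nat y" "nat y \<le> Suc n"
    using y by (auto simp: pm_iff)
  then obtain u where u: "u \<in> gen_by {nat y..<Suc n}" "u (int (nat y)) = int (Suc n)"
    using gen_by_moves_up by blast
  have "{nat y..<Suc n} \<subseteq> K \<inter> {..n}"
  proof
    fix i assume "i \<in> {nat y..<Suc n}"
    then have "i \<le> n \<and> y \<le> int i"
      using True by auto
    then show "i \<in> K \<inter> {..n}"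
      using K by auto
  qed
  then show ?thesis
    using gen_by_mono[OF u(1)] u(2) True by auto
next
  case False
  then have "K \<inter> {..n} = {..n}"
    using K by force
  obtain a where a: "1 \<le> a" "a \<le> Suc n" "y = - int a"
    using False y by (intro that[of "nat (- y)"]) (auto simp: pm_iff)
  obtain u1 where u1: "u1 \<in> gen_by {1..<a}" "u1 (- int a) = - 1"
    using gen_by_moves_down[of 1 a] a by auto
  obtain u2 where u2: "u2 \<in> gen_by {1..<Suc n}" "u2 1 = int (Suc n)"
    using gen_by_moves_up[of 1 "Suc n"] by auto
  have "u2 \<circ> gen 0 \<circ> u1 \<in> gen_by {..n}"
    using a by (intro gen_by_comp gen_by_mono[OF u1(1)] gen_by_mono[OF u2(1)] gen_in_gen_by) auto
  moreover have "(u2 \<circ> gen 0 \<circ> u1) y = int (Suc n)"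
    using u1(2) u2(2) a(3) by (simp add: gen_def)
  ultimately show ?thesis
    unfolding \<open>K \<inter> {..n} = {..n}\<close> by blast
qed

lemma Bn_in_gen_by_if_preserves_cuts:
  "w \<in> Bn n \<Longrightarrow> (\<And>j. j < n \<Longrightarrow> j \<notin> K \<Longrightarrow> preserves_cut w j) \<Longrightarrow> w \<in> gen_by K"
proof (induction n arbitrary: w)
  case 0
  then show ?case
    using Bn_0 by (auto intro: gen_by.intros)
next
  case (Suc n)
  define y where "y = w (int (Suc n))"
  have y: "y \<in> pm (Suc n)"
    unfolding y_def by (rule Bn_in_pm[OF Suc.prems(1)]) (simp add: pm_iff)
  have "{i. i \<le> n \<and> y \<le> int i} \<subseteq> K"
  proof (rule subsetI, rule ccontr)
    fix i assume i: "i \<in> {i. i \<le> n \<and> y \<le> int i}" "i \<notin> K"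
    then have "preserves_cut w i"
      using Suc.prems(2) by simp
    then have "int i < w (int (Suc n)) \<longleftrightarrow> int i < int (Suc n)"
      unfolding preserves_cut_def by blast
    then show False
      using i unfolding y_def by simp
  qed
  then obtain u where u: "u \<in> gen_by (K \<inter> {..n})" "u y = int (Suc n)"
    using gen_by_moves_to_top[OF y] by blast
  have uK: "u \<in> gen_by K"
    using gen_by_mono[OF u(1)] by blast
  have "u \<circ> w \<in> Bn n"
    by (rule Bn_SucD[OF Bn_comp[OF gen_by_Bn[OF u(1)] Suc.prems(1)]])
      (use u(2) y_def in auto)
  moreover have "preserves_cut (u \<circ> w) j" if "j < n" "j \<notin> K" for j
    using Suc.prems(2)[of j] gen_by_preserves_cut[OF uK, of j] that
    unfolding preserves_cut_def by simp
  ultimately have "u \<circ> w \<in> gen_by K"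
    by (rule Suc.IH)
  then show ?case
    by (rule gen_by_cancel_left[OF uK])
qed

lemma deg_Bn:
  assumes w: "w \<in> Bn n"
  shows "deg n w = card {j. j < n \<and> \<not> preserves_cut w j}"
proof -
  define J where "J = {j. j < n \<and> \<not> preserves_cut w j}"
  have J: "J \<subseteq> {..<n}" "w \<in> gen_by J"
    using Bn_in_gen_by_if_preserves_cuts[OF w, of J] unfolding J_def by auto
  have "card J \<le> card K" if "K \<subseteq> {..<n}" "w \<in> gen_by K" for K
  proof (rule card_mono)
    show "finite K"
      using that(1) finite_subset by blast
    show "J \<subseteq> K"
      using gen_by_preserves_cut[OF that(2)] unfolding J_def by blast
  qed
  then show ?thesis
    unfolding deg_def J_def[symmetric] by (intro Least_equality) (use J in auto)
qed

lemma preserves_cut_if_fixes_above: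
  assumes w: "w \<in> Bn n" and fixes_above: "\<And>x. int j < x \<Longrightarrow> x \<le> int n \<Longrightarrow> w x = x"
  shows "preserves_cut w j"
proof -
  have "int j < w x \<longleftrightarrow> int j < x" if x: "x \<in> pm n" for x
  proof
    have "w x \<in> pm n"
      by (rule Bn_in_pm[OF w x])
    moreover assume "int j < w x"
    ultimately have "w (w x) = w x"
      by (intro fixes_above) (auto simp: pm_iff)
    then have "w x = x"
      using Bn_inj[OF w \<open>w x \<in> pm n\<close> x] by simp
    with \<open>int j < w x\<close> show "int j < x" by simp
  next
    assume "int j < x"
    then show "int j < w x"
      using fixes_above x by (simp add: pm_iff)
  qed
  then show ?thesis
    unfolding preserves_cut_def using Bn_outside[OF w] by metis
qed

lemma preserves_cut_if_fixes_below:
  assumes w: "w \<in> Bn n" and fixes_below: "\<And>x. 1 \<le> x \<Longrightarrow> x \<le> int j \<Longrightarrow> w x = x"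
    and pos: "\<And>x. 1 \<le> x \<Longrightarrow> x \<le> int n \<Longrightarrow> 0 < w x"
  shows "preserves_cut w j"
proof -
  have "int j < w x \<longleftrightarrow> int j < x" if x: "x \<in> pm n" for x
  proof (cases "0 < x")
    case True
    show ?thesis
    proof
      assume "int j < x"
      show "int j < w x"
      proof (rule ccontr)
        assume "\<not> int j < w x"
        moreover have "0 < w x"
          using pos True x by (simp add: pm_iff)
        ultimately have "w (w x) = w x"
          using fixes_below by simp
        then have "w x = x"
          using Bn_inj[OF w Bn_in_pm[OF w x] x] by simp
        with \<open>int j < x\<close> \<open>\<not> int j < w x\<close> show False by simp
      qed
    next
      assume "int j < w x"
      then show "int j < x"
        using fixes_below[of x] True by fastforce
    qed
  next
    case False
    then have "0 < w (- x)"
      using pos x by (simp add: pm_iff)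
    then show ?thesis
      using False Bn_uminus[OF w, of x] by simp
  qed
  then show ?thesis
    unfolding preserves_cut_def using Bn_outside[OF w] by metis
qed

lemma sorted_list_of_set_Un_less:
  fixes S T :: "'a::linorder set"
  assumes "finite S" "finite T" "\<forall>x\<in>S. \<forall>y\<in>T. x < y"
  shows "sorted_list_of_set (S \<union> T) = sorted_list_of_set S @ sorted_list_of_set T"
  by (rule sorted_distinct_set_unique) (use assms in \<open>auto simp: sorted_append intro: less_imp_le\<close>)

lemma nth_sorted_list_of_set_initial:
  fixes S :: "int set"
  assumes "finite S" "{a..b} \<subseteq> S" "\<forall>s\<in>S. a \<le> s" "a \<le> x" "x \<le> b"
  shows "sorted_list_of_set S ! nat (x - a) = x"
proof -
  have "S = {a..b} \<union> {s \<in> S. b < s}"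
    using assms(2,3) by force
  then have "sorted_list_of_set S = sorted_list_of_set ({a..b} \<union> {s \<in> S. b < s})"
    by (rule arg_cong)
  also have "\<dots> = [a..b] @ sorted_list_of_set {s \<in> S. b < s}"
    using assms(1) by (subst sorted_list_of_set_Un_less) auto
  finally show ?thesis
    using assms(4,5) by (simp add: nth_append)
qed

lemma nth_sorted_list_of_set_final:
  fixes S :: "int set"
  assumes "finite S" "{a..b} \<subseteq> S" "\<forall>s\<in>S. s \<le> b" "a \<le> x" "x \<le> b"
  shows "sorted_list_of_set S ! (card S - nat (b - x) - 1) = x"
proof -
  define L where "L = {s \<in> S. s < a}"
  have split: "S = L \<union> {a..b}"
    using assms(2,3) unfolding L_def by force
  have "finite L"
    using assms(1) unfolding L_def by simp
  have "card S = card L + nat (b - a + 1)"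
    using \<open>finite L\<close> by (subst split, subst card_Un_disjoint) (auto simp: L_def)
  then have index: "card S - nat (b - x) - 1 = length (sorted_list_of_set L) + nat (x - a)"
    using assms(4,5) by simp
  from split have "sorted_list_of_set S = sorted_list_of_set (L \<union> {a..b})"
    by (rule arg_cong)
  also have "\<dots> = sorted_list_of_set L @ [a..b]"
    using \<open>finite L\<close> by (subst sorted_list_of_set_Un_less) (auto simp: L_def)
  finally show ?thesis
    unfolding index using assms(4,5) by (simp only: nth_append_length_plus) simp
qed

locale gamma_datum =
  fixes n :: nat and A :: "int set"
  assumes signed: "signed_subset n A" and nonempty: "A \<noteq> {}"
    and mA_less_MA: "mA A < MA n A" and gamma_Bn: "gamma_of n A \<in> Bn n"
begin

lemma A_subset_pm: "A \<subseteq> pm n"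
  using signed by (simp add: signed_subset_def)

lemma finite_A: "finite A"
  using A_subset_pm finite_pm finite_subset by blast

lemma mA_in_A: "mA A \<in> A"
  using finite_A nonempty by (simp add: mA_def)

lemma mA_le: "a \<in> A \<Longrightarrow> mA A \<le> a"
  using finite_A by (simp add: mA_def)

lemma mA_pm: "mA A \<in> pm n"
  using mA_in_A A_subset_pm by blast

lemma inj_on_abs_A: "inj_on abs A"
proof
  fix a b assume ab: "a \<in> A" "b \<in> A" "\<bar>a\<bar> = \<bar>b\<bar>"
  show "a = b"
  proof (rule ccontr)
    assume "a \<noteq> b"
    then have "a = - b"
      using ab(3) by (auto simp: abs_if split: if_splits)
    then show False
      using ab(1,2) signed unfolding signed_subset_def by blast
  qed
qed

lemma abs_A_subset: "abs ` A \<subseteq> {1..int n}"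
  using A_subset_pm by (auto simp: pm_iff)

lemma card_A_le: "card A \<le> n"
proof -
  have "card A = card (abs ` A)"
    using inj_on_abs_A by (simp add: card_image)
  also have "\<dots> \<le> card {1..int n}"
    using abs_A_subset by (intro card_mono) auto
  finally show ?thesis
    by simp
qed

definition C :: "int set" where
  "C = pm n - (A \<union> uminus ` A)"

definition C_pos :: "int set" where
  "C_pos = {x \<in> C. 0 < x}"

lemma C_pos_pos: "x \<in> C_pos \<Longrightarrow> 0 < x"
  by (simp add: C_pos_def)

lemma C_pos_eq: "C_pos = {1..int n} - abs ` A"
  unfolding C_pos_def C_def by (force simp: pm_iff image_iff abs_if)

lemma finite_C_pos: "finite C_pos"
  by (simp add: C_pos_eq)

lemma card_C_pos: "card C_pos = n - card A"
proof -
  have "card C_pos = card {1..int n} - card (abs ` A)"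
    unfolding C_pos_eq using abs_A_subset finite_A by (intro card_Diff_subset) auto
  then show ?thesis
    using inj_on_abs_A by (simp add: card_image)
qed

lemma C_eq: "C = uminus ` C_pos \<union> C_pos"
  unfolding C_pos_def C_def by (force simp: pm_iff image_iff)

lemma sorted_list_of_C:
  "sorted_list_of_set C = sorted_list_of_set (uminus ` C_pos) @ sorted_list_of_set C_pos"
  unfolding C_eq using finite_C_pos
  by (intro sorted_list_of_set_Un_less) (auto simp: C_pos_def)

lemma gamma_of_pos:
  assumes "1 \<le> p" "p \<le> int n"
  shows "gamma_of n A p = (sorted_list_of_set C_pos @ sorted_list_of_set A) ! nat (p - 1)"
proof -
  define P where "P = sorted_list_of_set (uminus ` A) @ sorted_list_of_set (uminus ` C_pos)"
  have "gamma_list n A = P @ (sorted_list_of_set C_pos @ sorted_list_of_set A)"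
    unfolding gamma_list_def C_def[symmetric] sorted_list_of_C P_def by simp
  moreover have "pos_index n p = length P + nat (p - 1)"
    using assms card_A_le finite_A finite_C_pos card_C_pos
    by (simp add: pos_index_def P_def card_image)
  ultimately show ?thesis
    using assms unfolding gamma_of_def by (simp add: pm_iff nth_append_length_plus)
qed

lemma gamma_of_C_pos:
  assumes "1 \<le> p" "p \<le> int n - int (card A)"
  shows "gamma_of n A p = sorted_list_of_set C_pos ! nat (p - 1)"
  using gamma_of_pos[of p] assms card_A_le card_C_pos by (simp add: nth_append)

lemma gamma_of_A:
  assumes "int n - int (card A) < p" "p \<le> int n"
  shows "gamma_of n A p = sorted_list_of_set A ! nat (p - 1 - (int n - int (card A)))"
proof -
  have "1 \<le> p"
    using assms card_A_le by linarith
  have "nat (p - 1) = length (sorted_list_of_set C_pos) + nat (p - 1 - (int n - int (card A)))"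
    using assms card_A_le card_C_pos by simp
  then show ?thesis
    unfolding gamma_of_pos[OF \<open>1 \<le> p\<close> assms(2)] by (simp only: nth_append_length_plus)
qed

lemma gamma_of_pos_mem:
  assumes "1 \<le> p" "p \<le> int n"
  shows "gamma_of n A p \<in> C_pos \<union> A"
proof -
  have "nat (p - 1) < length (sorted_list_of_set C_pos @ sorted_list_of_set A)"
    using assms card_A_le card_C_pos by simp
  then have "gamma_of n A p \<in> set (sorted_list_of_set C_pos @ sorted_list_of_set A)"
    unfolding gamma_of_pos[OF assms] by (rule nth_mem)
  then show ?thesis
    using finite_A finite_C_pos by simp
qed

lemma gamma_of_first_of_A: "gamma_of n A (int n - int (card A) + 1) = mA A"
proof -
  have "0 < card A"
    using finite_A nonempty by (simp add: card_gt_0_iff)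
  then have "gamma_of n A (int n - int (card A) + 1) = sorted_list_of_set A ! 0"
    using gamma_of_A card_A_le by simp
  also have "\<dots> = mA A"
    using sorted_list_of_set_nonempty[OF finite_A nonempty] by (simp add: mA_def)
  finally show ?thesis .
qed

lemma MA_eq_Max_C_pos:
  assumes "card A < n"
  shows "C_pos \<noteq> {}" "MA n A = Max C_pos"
proof -
  show "C_pos \<noteq> {}"
    using card_C_pos assms by auto
  have "Max C = Max C_pos"
  proof (rule Max_eqI)
    show "finite C"
      unfolding C_eq using finite_C_pos by simp
    show "Max C_pos \<in> C"
      using Max_in[OF finite_C_pos \<open>C_pos \<noteq> {}\<close>] unfolding C_pos_def by simp
    fix y assume "y \<in> C"
    then have "\<bar>y\<bar> \<in> C_pos"
      unfolding C_eq by (auto simp: abs_of_pos C_pos_pos)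
    then show "y \<le> Max C_pos"
      using Max_ge[OF finite_C_pos] by force
  qed
  then show "MA n A = Max C_pos"
    using assms unfolding MA_def C_def by simp
qed

lemma gamma_of_last_of_C_pos:
  assumes "card A < n"
  shows "gamma_of n A (int n - int (card A)) = MA n A"
proof -
  have "Max C_pos \<in> C_pos"
    using Max_in[OF finite_C_pos MA_eq_Max_C_pos(1)[OF assms]] .
  then have "sorted_list_of_set C_pos ! (card C_pos - 1) = Max C_pos"
    using nth_sorted_list_of_set_final[OF finite_C_pos, of "Max C_pos" "Max C_pos" "Max C_pos"]
      finite_C_pos by simp
  moreover have "nat (int n - int (card A) - 1) = card C_pos - 1"
    using assms card_C_pos by simp
  ultimately show ?thesis
    using gamma_of_C_pos[of "int n - int (card A)"] assms MA_eq_Max_C_pos(2)[OF assms]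
    by simp
qed

lemma MA_full: "card A = n \<Longrightarrow> MA n A = - mA A"
  by (simp add: MA_def mA_def)

lemma MA_bounds: "1 \<le> MA n A" "MA n A \<le> int n"
proof -
  have "MA n A \<in> {1..int n}"
  proof (cases "card A < n")
    case True
    then have "MA n A \<in> C_pos"
      using MA_eq_Max_C_pos[OF True] Max_in[OF finite_C_pos] by simp
    then show ?thesis
      unfolding C_pos_eq by blast
  next
    case False
    then have "MA n A = - mA A"
      using MA_full card_A_le by simp
    then show ?thesis
      using mA_less_MA mA_pm by (auto simp: pm_iff)
  qed
  then show "1 \<le> MA n A" "MA n A \<le> int n"
    by auto
qed

lemma gamma_breaks_cut:
  assumes "mA A \<le> int j \<and> int j < MA n A \<or> int j < - mA A"
  shows "\<not> preserves_cut (gamma_of n A) j"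
proof -
  define p where "p = int n - int (card A) + 1"
  have "1 \<le> p"
    using card_A_le by (simp add: p_def)
  have at_p: "gamma_of n A p = mA A"
    using gamma_of_first_of_A p_def by simp
  then have at_minus_p: "gamma_of n A (- p) = - mA A"
    using Bn_uminus[OF gamma_Bn] by simp
  have "\<exists>x. (int j < gamma_of n A x) \<noteq> (int j < x)"
  proof (cases "int j < - mA A")
    case True
    then show ?thesis
      using at_minus_p \<open>1 \<le> p\<close> by (intro exI[of _ "- p"]) simp
  next
    case False
    then have j: "mA A \<le> int j" "int j < MA n A"
      using assms by auto
    show ?thesis
    proof (cases "int j < p")
      case True
      then show ?thesis
        using at_p j by (intro exI[of _ p]) simp
    next
      case p_le_j: False
      have "card A < n"
      proof (rule ccontr)
        assume "\<not> card A < n"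
        then have "MA n A = - mA A"
          using MA_full card_A_le by simp
        then show False
          using j \<open>\<not> int j < - mA A\<close> by simp
      qed
      then show ?thesis
        using gamma_of_last_of_C_pos j p_le_j unfolding p_def
        by (intro exI[of _ "p - 1"]) (simp add: p_def)
    qed
  qed
  then show ?thesis
    unfolding preserves_cut_def by blast
qed

lemma gamma_preserves_cut_above:
  assumes "MA n A \<le> int j" "- mA A \<le> int j"
  shows "preserves_cut (gamma_of n A) j"
proof (rule preserves_cut_if_fixes_above[OF gamma_Bn])
  have top: "{int j + 1..int n} \<subseteq> A"
  proof
    fix y assume y: "y \<in> {int j + 1..int n}"
    have "y \<notin> C_pos"
    proof
      assume "y \<in> C_pos"
      then have "card C_pos \<noteq> 0"
        using finite_C_pos by auto
      then have "card A < n"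
        using card_C_pos by simp
      then have "y \<le> MA n A"
        using MA_eq_Max_C_pos finite_C_pos \<open>y \<in> C_pos\<close> by simp
      then show False
        using y assms(1) by simp
    qed
    moreover have "y \<in> {1..int n}"
      using y by simp
    ultimately obtain a where a: "a \<in> A" "y = \<bar>a\<bar>"
      unfolding C_pos_eq by blast
    have "- y \<notin> A"
    proof
      assume "- y \<in> A"
      then have "mA A \<le> - y"
        by (rule mA_le)
      then show False
        using y assms(2) by simp
    qed
    with a show "y \<in> A"
      by (cases "0 \<le> a") auto
  qed
  have A_le_n: "s \<le> int n" if "s \<in> A" for s
  proof -
    have "s \<in> pm n"
      using A_subset_pm that by blast
    then show ?thesis
      by (simp add: pm_iff abs_le_iff)
  qed
  fix x assume x: "int j < x" "x \<le> int n"
  have "card {int j + 1..int n} \<le> card A"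
    using top finite_A by (rule card_mono[rotated])
  then have "int n - int (card A) < x"
    using x by simp
  then have "gamma_of n A x = sorted_list_of_set A ! nat (x - 1 - (int n - int (card A)))"
    using gamma_of_A x(2) by blast
  also have "nat (x - 1 - (int n - int (card A))) = card A - nat (int n - x) - 1"
    using \<open>int n - int (card A) < x\<close> x(2) by simp
  also have "sorted_list_of_set A ! \<dots> = x"
    using A_le_n x by (intro nth_sorted_list_of_set_final[OF finite_A top]) auto
  finally show "gamma_of n A x = x" .
qed

lemma gamma_preserves_cut_below:
  assumes "0 < mA A" "int j < mA A"
  shows "preserves_cut (gamma_of n A) j"
proof (rule preserves_cut_if_fixes_below[OF gamma_Bn])
  have bottom: "{1..int j} \<subseteq> C_pos"
  proof
    fix y assume y: "y \<in> {1..int j}"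
    have "y \<notin> abs ` A"
      using mA_le assms y by force
    moreover have "y \<le> int n"
      using y assms mA_pm by (auto simp: pm_iff)
    ultimately show "y \<in> C_pos"
      using y unfolding C_pos_eq by simp
  qed
  fix x assume x: "1 \<le> x" "x \<le> int j"
  have "int j \<le> int n - int (card A)"
    using card_mono[OF finite_C_pos bottom] card_C_pos card_A_le by simp
  then show "gamma_of n A x = x"
    using gamma_of_C_pos[of x] nth_sorted_list_of_set_initial[OF finite_C_pos bottom, of x] x C_pos_pos
    by force
next
  fix x assume "1 \<le> x" "x \<le> int n"
  then have "gamma_of n A x \<in> C_pos \<union> A"
    by (rule gamma_of_pos_mem)
  then show "0 < gamma_of n A x"
    using C_pos_pos mA_le assms(1) by force
qed

lemma gamma_broken_cuts:
  "{j. j < n \<and> \<not> preserves_cut (gamma_of n A) j}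
     = {j. j < n \<and> (mA A \<le> int j \<and> int j < MA n A \<or> int j < - mA A)}"
proof -
  have "preserves_cut (gamma_of n A) j"
    if "\<not> (mA A \<le> int j \<and> int j < MA n A \<or> int j < - mA A)" for j
  proof (cases "MA n A \<le> int j")
    case True
    then show ?thesis
      using that by (intro gamma_preserves_cut_above) auto
  next
    case False
    then show ?thesis
      using that by (intro gamma_preserves_cut_below) auto
  qed
  then show ?thesis
    using gamma_breaks_cut by blast
qed

lemma deg_gamma:
  "int (deg n (gamma_of n A)) = (if 0 < mA A then MA n A - mA A else max (MA n A) (- mA A))"
proof -
  let ?J = "{j. j < n \<and> (mA A \<le> int j \<and> int j < MA n A \<or> int j < - mA A)}"
  have deg: "deg n (gamma_of n A) = card ?J"
    using deg_Bn[OF gamma_Bn] gamma_broken_cuts by simp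
  have "- int n \<le> mA A"
    using mA_pm by (auto simp: pm_iff)
  show ?thesis
  proof (cases "0 < mA A")
    case True
    then have "?J = {nat (mA A)..<nat (MA n A)}"
      using MA_bounds by auto
    then show ?thesis
      using deg True mA_less_MA by simp
  next
    case False
    then have "?J = {..<nat (max (MA n A) (- mA A))}"
      using MA_bounds \<open>- int n \<le> mA A\<close> by auto
    then show ?thesis
      using deg False MA_bounds by simp
  qed
qed

end

lemma card_pm_between:
  assumes "m \<in> pm n" "1 \<le> M" "M \<le> int n" "m < M"
  shows "int (card {i \<in> pm n. m < i \<and> i < M}) = (if 0 < m then M - m - 1 else M - m - 2)"
proof (cases "0 < m")
  case True
  then have "{i \<in> pm n. m < i \<and> i < M} = {m<..<M}"
    using assms(3) by (auto simp: pm_iff)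
  then show ?thesis
    using True assms(4) by simp
next
  case False
  then have "{i \<in> pm n. m < i \<and> i < M} = {m<..<M} - {0}"
    using assms by (auto simp: pm_iff)
  moreover have "0 \<in> {m<..<M}"
    using False assms by (auto simp: pm_iff)
  ultimately have "card {i \<in> pm n. m < i \<and> i < M} = nat (M - m - 1) - 1"
    by (simp add: card_Diff_singleton)
  moreover have "2 \<le> M - m"
    using \<open>0 \<in> {m<..<M}\<close> by simp
  ultimately show ?thesis
    using False by simp
qed

theorem lemma3p7:
  fixes n :: nat and A :: "int set" and \<gamma> :: "int \<Rightarrow> int"
  assumes "join_irreducible n \<gamma>"
    and "signed_subset n A" and "A \<noteq> {}" and "MA n A > mA A"
    and "\<gamma> = gamma_of n A"
  shows "(deg n \<gamma> = 1 \<longleftrightarrow> card {i \<in> pm n. mA A < i \<and> i < MA n A} = 0)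
       \<and> (deg n \<gamma> = 2 \<longleftrightarrow> card {i \<in> pm n. mA A < i \<and> i < MA n A} = 1
                           \<or> (mA A = -2 \<and> MA n A = 2))"
proof -
  interpret gamma_datum n A
    using assms unfolding join_irreducible_def by unfold_locales auto
  have "mA A \<noteq> 0"
    using mA_pm by (auto simp: pm_iff)
  have deg: "int (deg n \<gamma>) = (if 0 < mA A then MA n A - mA A else max (MA n A) (- mA A))"
    using deg_gamma assms(5) by simp
  have card: "int (card {i \<in> pm n. mA A < i \<and> i < MA n A})
      = (if 0 < mA A then MA n A - mA A - 1 else MA n A - mA A - 2)"
    by (rule card_pm_between[OF mA_pm MA_bounds mA_less_MA])
  obtain d c where d: "deg n \<gamma> = d" and c: "card {i \<in> pm n. mA A < i \<and> i < MA n A} = c"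
    by blast
  show ?thesis
    using deg card \<open>mA A \<noteq> 0\<close> MA_bounds(1) mA_less_MA unfolding d c
    by (cases "0 < mA A") (auto simp: max_def split: if_splits)
qed

end
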